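(* Consider the Qs predictor with queue capacity $\mathrm{qcap}\ge2$ processing an arbitrary sequence of items. For any item $i$ with a queue $q(i)$ (so $|q(i)|\le\mathrm{qcap}$), let $Y_i:=\sum_{0\le j<|q(i)|}c_j-1$ and use the estimate $Q(i)=(|q(i)|-1)/Y_i$ (and $Q(i)=0$ when $|q(i)|\le1$ or $i$ has no queue). Then for every time $t\ge1$: (1) $Q^{(t)}(i)$, when nonzero, has the form $a/b$ with $a,b$ integers and $b\ge a\ge1$; (2) for an item $i$ with a queue at time $t$: if $i$ is not observed at time $t$, then $Y_i^{(t+1)}=Y_i^{(t)}+1$ or $i$ is removed from the queue map; if $i$ is observed at time $t$, then $Y_i^{(t+1)}\le Y_i^{(t)}$ when $|q^{(t)}(i)|=\mathrm{qcap}$, and $Y_i^{(t+1)}=Y_i^{(t)}+1$ when $|q^{(t)}(i)|<\mathrm{qcap}$; (3) if $i$ is observed at time $t$, then $Q^{(t+1)}(i)\ge Q^{(t)}(i)$; if $i$ is not observed at time $t$, then $Q^{(t+1)}(i)<Q^{(t)}(i)$ or $Q^{(t+1)}(i)=Q^{(t)}(i)=0$.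
   Context: The Qs predictor keeps a map from items to queues of positive integer counts ("cells"), the newest cell being $c_0$ ("cell0"), the older cells $c_1,c_2,\dots$; each queue holds at most $\mathrm{qcap}$ cells. At each time $t$, the predictor first outputs its estimates $Q^{(t)}$, then observes the item $o^{(t)}$ and updates: if $o^{(t)}$ has no queue, an empty queue is created for it; then the queue of $o^{(t)}$ receives a positive update (if it has fewer than $\mathrm{qcap}$ cells its size grows by one; all existing cells shift one position older, the oldest being discarded if the queue was at capacity; and a new cell $c_0=1$ is created), while every other existing queue receives a negative update (its $c_0$ is incremented by $1$). Occasionally (pruning) items may be removed from the map together with their queues. $q^{(t)}(i)$, $Y_i^{(t)}$ and $Q^{(t)}(i)$ denote the queue of $i$, the quantity $Y_i$, and the estimate at time $t$, i.e. before the update at time $t$. *)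

theory Defs
  imports Complex_Main
begin

text \<open>A queue is a list of positive counts, newest cell c0 first.
  The queue map is a partial map from items to queues.\<close>

type_synonym 'a qmap = "'a \<Rightarrow> nat list option"

definition neg_update :: "nat list \<Rightarrow> nat list" where
  "neg_update q = (case q of [] \<Rightarrow> [] | c # cs \<Rightarrow> Suc c # cs)"

definition pos_update :: "nat \<Rightarrow> nat list \<Rightarrow> nat list" where
  "pos_update qcap q = 1 # take (qcap - 1) q"

definition qs_update :: "nat \<Rightarrow> 'a \<Rightarrow> 'a qmap \<Rightarrow> 'a qmap" where
  "qs_update qcap ob M = (\<lambda>x. if x = ob
      then Some (pos_update qcap (case M ob of None \<Rightarrow> [] | Some q \<Rightarrow> q))
      else map_option neg_update (M x))"

definition Yval :: "nat list \<Rightarrow> int" where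
  "Yval q = int (sum_list q) - 1"

definition Qest :: "'a qmap \<Rightarrow> 'a \<Rightarrow> real" where
  "Qest M i = (case M i of None \<Rightarrow> 0
     | Some q \<Rightarrow> if length q \<le> 1 then 0
                 else (real (length q) - 1) / real_of_int (Yval q))"

text \<open>A run of the Qs predictor: S t is the queue map at time t (before the update
  at time t), starting empty at time 1; at each time t \<ge> 1 the observed item obs t
  is processed, then an arbitrary set P of items (not containing obs t) is pruned.\<close>
definition qs_run :: "nat \<Rightarrow> (nat \<Rightarrow> 'a) \<Rightarrow> (nat \<Rightarrow> 'a qmap) \<Rightarrow> bool" where
  "qs_run qcap obs S \<longleftrightarrow>
     S 1 = (\<lambda>_. None) \<and>
     (\<forall>t\<ge>1. \<exists>P. obs t \<notin> P \<and>
        S (Suc t) = (\<lambda>x. if x \<in> P then None else qs_update qcap (obs t) (S t) x))"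

end

theory Submission
  imports Defs
begin

text \<open>Every queue of a run is nonempty, has positive cells and at most qcap of them, so
  Y \<ge> |q| - 1 and Q = (|q| - 1) / Y lies in [0, 1].  A negative update raises Y by one
  at fixed length, which lowers Q.  A positive update either raises Y by one together
  with the length, which takes (l - 1)/Y to l/(Y + 1) \<ge> (l - 1)/Y because Y \<ge> l - 1,
  or, at capacity, replaces the oldest cell (at least 1) by the new cell 1, which
  cannot raise Y.\<close>

definition valid_queue :: "nat \<Rightarrow> nat list \<Rightarrow> bool" where
  "valid_queue qcap q \<longleftrightarrow> q \<noteq> [] \<and> (\<forall>c\<in>set q. 0 < c) \<and> length q \<le> qcap"

definition queue_est :: "nat list \<Rightarrow> real" where
  "queue_est q = (if length q \<le> 1 then 0 else (real (length q) - 1) / real_of_int (Yval q))"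

lemma Qest_eq_queue_est: "Qest M i = (case M i of None \<Rightarrow> 0 | Some q \<Rightarrow> queue_est q)"
  unfolding Qest_def queue_est_def by (simp split: option.splits)

lemma length_le_sum_list_pos: "\<forall>c\<in>set q. 0 < c \<Longrightarrow> length q \<le> sum_list (q :: nat list)"
  by (induction q) auto

lemma Yval_ge_length: "\<forall>c\<in>set q. 0 < c \<Longrightarrow> int (length q) - 1 \<le> Yval q"
  using length_le_sum_list_pos[of q] unfolding Yval_def by simp

lemma length_neg_update [simp]: "length (neg_update q) = length q"
  unfolding neg_update_def by (simp split: list.split)

lemma Yval_neg_update: "q \<noteq> [] \<Longrightarrow> Yval (neg_update q) = Yval q + 1"
  unfolding neg_update_def Yval_def by (auto split: list.split)

lemma valid_queue_neg_update: "valid_queue qcap q \<Longrightarrow> valid_queue qcap (neg_update q)"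
  unfolding valid_queue_def neg_update_def by (auto split: list.split)

lemma valid_queue_pos_update:
  "0 < qcap \<Longrightarrow> \<forall>c\<in>set q. 0 < c \<Longrightarrow> valid_queue qcap (pos_update qcap q)"
  unfolding valid_queue_def pos_update_def by (auto dest: in_set_takeD)

lemma pos_update_below_capacity:
  assumes "length q < qcap"
  shows "length (pos_update qcap q) = Suc (length q)" "Yval (pos_update qcap q) = Yval q + 1"
  using assms unfolding pos_update_def Yval_def by auto

lemma pos_update_at_capacity:
  assumes "length q = qcap" and "q \<noteq> []" and "\<forall>c\<in>set q. 0 < c"
  shows "length (pos_update qcap q) = length q" "Yval (pos_update qcap q) \<le> Yval q"
proof -
  have dropped: "pos_update qcap q = 1 # butlast q"
    using assms(1) unfolding pos_update_def by (simp add: butlast_conv_take)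
  then show "length (pos_update qcap q) = length q"
    using assms(2) by simp
  have "sum_list q = sum_list (butlast q) + last q"
    using append_butlast_last_id[OF assms(2)]
    by (metis sum_list_append sum_list.Cons sum_list.Nil add_0_right)
  moreover have "0 < last q"
    using assms(2,3) by simp
  ultimately show "Yval (pos_update qcap q) \<le> Yval q"
    unfolding dropped Yval_def by simp
qed

lemma queue_est_nonneg: "\<forall>c\<in>set q. 0 < c \<Longrightarrow> 0 \<le> queue_est q"
  using Yval_ge_length[of q] unfolding queue_est_def by auto

lemma queue_est_fraction:
  assumes "\<forall>c\<in>set q. 0 < c" and "queue_est q \<noteq> 0"
  shows "\<exists>a b :: int. queue_est q = real_of_int a / real_of_int b \<and> 1 \<le> a \<and> a \<le> b"
proof (intro exI conjI)
  have "1 < length q"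
    using assms(2) unfolding queue_est_def by (auto split: if_splits)
  then show "queue_est q = real_of_int (int (length q) - 1) / real_of_int (Yval q)"
    and "1 \<le> int (length q) - 1"
    unfolding queue_est_def by auto
  show "int (length q) - 1 \<le> Yval q"
    using Yval_ge_length[OF assms(1)] .
qed

lemma queue_est_neg_update:
  assumes "\<forall>c\<in>set q. 0 < c"
  shows "queue_est (neg_update q) < queue_est q \<or> (queue_est (neg_update q) = 0 \<and> queue_est q = 0)"
proof (cases "length q \<le> 1")
  case True
  then show ?thesis unfolding queue_est_def by simp
next
  case False
  then have "q \<noteq> []" by auto
  have "real (length q) - 1 \<le> real_of_int (Yval q)"
    using Yval_ge_length[OF assms] by simp
  with False have "(real (length q) - 1) / (real_of_int (Yval q) + 1)
      < (real (length q) - 1) / real_of_int (Yval q)"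
    by (simp add: field_simps)
  with False show ?thesis
    using Yval_neg_update[OF \<open>q \<noteq> []\<close>] unfolding queue_est_def by simp
qed

lemma queue_est_pos_update:
  assumes "0 < qcap" and "valid_queue qcap q"
  shows "queue_est q \<le> queue_est (pos_update qcap q)"
proof -
  have pos: "\<forall>c\<in>set q. 0 < c" and "q \<noteq> []" and "length q \<le> qcap"
    using assms(2) unfolding valid_queue_def by auto
  have est'_nonneg: "0 \<le> queue_est (pos_update qcap q)"
    using valid_queue_pos_update[OF assms(1) pos] queue_est_nonneg
    unfolding valid_queue_def by blast
  consider "length q \<le> 1" | "1 < length q" "length q = qcap" | "1 < length q" "length q < qcap"
    using \<open>length q \<le> qcap\<close> by linarith
  then show ?thesis
  proof cases
    case 1
    then show ?thesis using est'_nonneg unfolding queue_est_def by simp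
  next
    case 2
    have "real_of_int (Yval (pos_update qcap q)) \<le> real_of_int (Yval q)"
      and "real (length q) - 1 \<le> real_of_int (Yval (pos_update qcap q))"
      using pos_update_at_capacity[OF 2(2) \<open>q \<noteq> []\<close> pos]
        Yval_ge_length[of "pos_update qcap q"] valid_queue_pos_update[OF assms(1) pos]
      unfolding valid_queue_def by auto
    with 2 show ?thesis
      using pos_update_at_capacity(1)[OF 2(2) \<open>q \<noteq> []\<close> pos]
      unfolding queue_est_def by (auto intro: divide_left_mono)
  next
    case 3
    have "real (length q) - 1 \<le> real_of_int (Yval q)"
      using Yval_ge_length[OF pos] by simp
    with 3 have "(real (length q) - 1) / real_of_int (Yval q)
        \<le> real (length q) / (real_of_int (Yval q) + 1)"
      by (simp add: field_simps)
    with 3 show ?thesis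
      using pos_update_below_capacity[OF 3(2)] unfolding queue_est_def by auto
  qed
qed

lemma qs_run_step:
  assumes "qs_run qcap obs S" and "1 \<le> t"
  obtains P where "obs t \<notin> P"
    "S (Suc t) = (\<lambda>x. if x \<in> P then None else qs_update qcap (obs t) (S t) x)"
  using assms unfolding qs_run_def by blast

lemma qs_run_observed:
  assumes "qs_run qcap obs S" and "1 \<le> t"
  shows "S (Suc t) (obs t) = Some (pos_update qcap (case S t (obs t) of None \<Rightarrow> [] | Some q \<Rightarrow> q))"
  using assms by (rule qs_run_step) (simp add: qs_update_def)

lemma qs_run_unobserved:
  assumes "qs_run qcap obs S" and "1 \<le> t" and "obs t \<noteq> i"
  shows "S (Suc t) i = None \<or> S (Suc t) i = map_option neg_update (S t i)"
  using assms(1,2) by (rule qs_run_step) (use assms(3) in \<open>simp add: qs_update_def\<close>)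

lemma qs_run_valid_queue:
  assumes "0 < qcap" and "qs_run qcap obs S" and "1 \<le> t" and "S t i = Some q"
  shows "valid_queue qcap q"
  using assms(3,4)
proof (induction t arbitrary: i q rule: dec_induct)
  case base
  then show ?case using assms(2) unfolding qs_run_def by simp
next
  case (step t)
  show ?case
  proof (cases "obs t = i")
    case True
    have "\<forall>c\<in>set (case S t i of None \<Rightarrow> [] | Some q \<Rightarrow> q). 0 < c"
      using step.IH unfolding valid_queue_def by (cases "S t i") auto
    with True show ?thesis
      using qs_run_observed[OF assms(2) step.hyps(1)] step.prems valid_queue_pos_update[OF assms(1)]
      by auto
  next
    case False
    then show ?thesis
      using qs_run_unobserved[OF assms(2) step.hyps(1) False] step.prems step.IH
        valid_queue_neg_update by (cases "S t i") auto
  qed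
qed

lemma qs_run_Qest_fraction:
  assumes "0 < qcap" and "qs_run qcap obs S" and "1 \<le> t" and "Qest (S t) i \<noteq> 0"
  shows "\<exists>a b :: int. Qest (S t) i = real_of_int a / real_of_int b \<and> 1 \<le> a \<and> a \<le> b"
  using assms(4) qs_run_valid_queue[OF assms(1-3), of i] queue_est_fraction
  unfolding Qest_eq_queue_est valid_queue_def by (auto split: option.splits)

lemma qs_run_Yval_unobserved:
  assumes "0 < qcap" and "qs_run qcap obs S" and "1 \<le> t" and "obs t \<noteq> i" and "S t i = Some q"
  shows "S (Suc t) i = None \<or> (\<exists>q'. S (Suc t) i = Some q' \<and> Yval q' = Yval q + 1)"
  using qs_run_unobserved[OF assms(2-4)] qs_run_valid_queue[OF assms(1-3,5)] assms(5)
    Yval_neg_update[of q] unfolding valid_queue_def by auto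

lemma qs_run_Yval_observed:
  assumes "0 < qcap" and "qs_run qcap obs S" and "1 \<le> t" and "obs t = i" and "S t i = Some q"
  shows "\<exists>q'. S (Suc t) i = Some q' \<and>
           (length q = qcap \<longrightarrow> Yval q' \<le> Yval q) \<and> (length q < qcap \<longrightarrow> Yval q' = Yval q + 1)"
  using qs_run_observed[OF assms(2,3)] qs_run_valid_queue[OF assms(1-3,5)] assms(4,5)
    pos_update_at_capacity(2)[of q qcap] pos_update_below_capacity(2)[of q qcap]
  unfolding valid_queue_def by auto

lemma qs_run_Qest_observed:
  assumes "0 < qcap" and "qs_run qcap obs S" and "1 \<le> t"
  shows "Qest (S t) (obs t) \<le> Qest (S (Suc t)) (obs t)"
proof (cases "S t (obs t)")
  case None
  have "valid_queue qcap (pos_update qcap [])"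
    using valid_queue_pos_update[OF assms(1)] by simp
  with None show ?thesis
    using qs_run_observed[OF assms(2,3)] queue_est_nonneg
    unfolding Qest_eq_queue_est valid_queue_def by simp
next
  case (Some q)
  then show ?thesis
    using qs_run_observed[OF assms(2,3)] qs_run_valid_queue[OF assms(1-3) Some]
      queue_est_pos_update[OF assms(1)] unfolding Qest_eq_queue_est by simp
qed

lemma qs_run_Qest_unobserved:
  assumes "0 < qcap" and "qs_run qcap obs S" and "1 \<le> t" and "obs t \<noteq> i"
  shows "Qest (S (Suc t)) i < Qest (S t) i \<or> (Qest (S (Suc t)) i = 0 \<and> Qest (S t) i = 0)"
proof (cases "S t i")
  case None
  then show ?thesis
    using qs_run_unobserved[OF assms(2-4)] unfolding Qest_eq_queue_est by auto
next
  case (Some q)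
  then have pos: "\<forall>c\<in>set q. 0 < c"
    using qs_run_valid_queue[OF assms(1-3)] unfolding valid_queue_def by blast
  with Some show ?thesis
    using qs_run_unobserved[OF assms(2-4)] queue_est_neg_update[OF pos] queue_est_nonneg[OF pos]
    unfolding Qest_eq_queue_est by auto
qed

theorem lemma13:
  fixes qcap :: nat and obs :: "nat \<Rightarrow> 'a" and S :: "nat \<Rightarrow> 'a qmap"
  assumes "qcap \<ge> 2"
    and "qs_run qcap obs S"
  shows "\<forall>t\<ge>1. \<forall>i.
     (Qest (S t) i \<noteq> 0 \<longrightarrow>
        (\<exists>a b :: int. Qest (S t) i = real_of_int a / real_of_int b \<and> 1 \<le> a \<and> a \<le> b))
   \<and> (\<forall>q. S t i = Some q \<longrightarrow>
        (obs t \<noteq> i \<longrightarrow>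
           S (Suc t) i = None \<or> (\<exists>q'. S (Suc t) i = Some q' \<and> Yval q' = Yval q + 1))
      \<and> (obs t = i \<longrightarrow>
           (\<exists>q'. S (Suc t) i = Some q' \<and>
              (length q = qcap \<longrightarrow> Yval q' \<le> Yval q) \<and>
              (length q < qcap \<longrightarrow> Yval q' = Yval q + 1))))
   \<and> (obs t = i \<longrightarrow> Qest (S (Suc t)) i \<ge> Qest (S t) i)
   \<and> (obs t \<noteq> i \<longrightarrow>
        Qest (S (Suc t)) i < Qest (S t) i \<or>
        (Qest (S (Suc t)) i = 0 \<and> Qest (S t) i = 0))"
proof (intro allI impI conjI)
  have qcap: "0 < qcap" using assms(1) by simp
  fix t :: nat and i q
  assume "1 \<le> t"
  note run = qcap assms(2) \<open>1 \<le> t\<close>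
  show "\<exists>a b :: int. Qest (S t) i = real_of_int a / real_of_int b \<and> 1 \<le> a \<and> a \<le> b"
    if "Qest (S t) i \<noteq> 0"
    using qs_run_Qest_fraction[OF run that] .
  show "S (Suc t) i = None \<or> (\<exists>q'. S (Suc t) i = Some q' \<and> Yval q' = Yval q + 1)"
    if "S t i = Some q" and "obs t \<noteq> i"
    using qs_run_Yval_unobserved[OF run that(2,1)] .
  show "\<exists>q'. S (Suc t) i = Some q' \<and>
      (length q = qcap \<longrightarrow> Yval q' \<le> Yval q) \<and> (length q < qcap \<longrightarrow> Yval q' = Yval q + 1)"
    if "S t i = Some q" and "obs t = i"
    using qs_run_Yval_observed[OF run that(2,1)] .
  show "Qest (S t) i \<le> Qest (S (Suc t)) i" if "obs t = i"
    using qs_run_Qest_observed[OF run] that by simp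
  show "Qest (S (Suc t)) i < Qest (S t) i \<or> (Qest (S (Suc t)) i = 0 \<and> Qest (S t) i = 0)"
    if "obs t \<noteq> i"
    using qs_run_Qest_unobserved[OF run that] .
qed

end
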